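(* Let $ABC$ be a triangle with side lengths $a,b,c$, semiperimeter $s$, circumcenter $O$ and circumradius $R$. Let $P$ be a point with barycentric coordinates $t_1:t_2:t_3$ with respect to $ABC$, where $t_1,t_2,t_3>0$, and let $t=t_1+t_2+t_3$. Then $$R^2-OP^2\ge\frac{4s^2\,t_1t_2t_3}{t^3},$$ with equality if and only if $t_1:t_2:t_3=a:b:c$, i.e. $P$ is the incenter of $ABC$.
   Context: A point $P$ has barycentric coordinates $t_1:t_2:t_3$ (with $t_1+t_2+t_3\neq0$) with respect to triangle $ABC$ if $P=\frac{t_1A+t_2B+t_3C}{t_1+t_2+t_3}$ (as vectors). *)

theory Defs
  imports "HOL-Analysis.Analysis"
begin

end

theory Submission
  imports Defs
begin

(* Geometric half: writing u = A - O, v = B - O, w = C - O, the weighted variance identity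
     t (t1 |u|^2 + t2 |v|^2 + t3 |w|^2) - |t1 u + t2 v + t3 w|^2
       = t2 t3 |v - w|^2 + t3 t1 |w - u|^2 + t1 t2 |u - v|^2
   holds in any real inner product space. Since |u| = |v| = |w| = R and
   t1 u + t2 v + t3 w = t (P - O), it gives the power of P with respect to the circumcircle:
     R^2 - OP^2 = (t2 t3 a^2 + t3 t1 b^2 + t1 t2 c^2) / t^2.

   Algebraic half: t (t2 t3 a^2 + t3 t1 b^2 + t1 t2 c^2) - (a + b + c)^2 t1 t2 t3 is an explicit
   sum of squares with positive weights, so it is nonnegative and vanishes exactly when
   t1 : t2 : t3 = a : b : c. *)

lemma weighted_variance_identity:
  fixes u v w :: "'a::real_inner" and t1 t2 t3 :: real
  shows "(t1 + t2 + t3) * (t1 * (norm u)\<^sup>2 + t2 * (norm v)\<^sup>2 + t3 * (norm w)\<^sup>2)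
           - (norm (t1 *\<^sub>R u + t2 *\<^sub>R v + t3 *\<^sub>R w))\<^sup>2
         = t2 * t3 * (norm (v - w))\<^sup>2 + t3 * t1 * (norm (w - u))\<^sup>2 + t1 * t2 * (norm (u - v))\<^sup>2"
  unfolding power2_norm_eq_inner
  by (simp add: inner_add_left inner_add_right inner_diff_left inner_diff_right
      inner_commute[of v u] inner_commute[of w u] inner_commute[of w v] algebra_simps)

lemma power_of_barycentric_point:
  fixes A B C Oc P :: "'a::real_inner" and R t1 t2 t3 :: real
  assumes circ: "dist Oc A = R" "dist Oc B = R" "dist Oc C = R"
    and t_nz: "t1 + t2 + t3 \<noteq> 0"
    and P_def: "P = (1 / (t1 + t2 + t3)) *\<^sub>R (t1 *\<^sub>R A + t2 *\<^sub>R B + t3 *\<^sub>R C)"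
  shows "R\<^sup>2 - (dist Oc P)\<^sup>2
       = (t2 * t3 * (dist B C)\<^sup>2 + t3 * t1 * (dist C A)\<^sup>2 + t1 * t2 * (dist A B)\<^sup>2)
         / (t1 + t2 + t3)\<^sup>2"
proof -
  define t where "t = t1 + t2 + t3"
  have "t *\<^sub>R P = t1 *\<^sub>R A + t2 *\<^sub>R B + t3 *\<^sub>R C"
    using t_nz unfolding P_def t_def by simp
  then have mean: "t1 *\<^sub>R (A - Oc) + t2 *\<^sub>R (B - Oc) + t3 *\<^sub>R (C - Oc) = t *\<^sub>R (P - Oc)"
    unfolding t_def by (simp add: algebra_simps)
  have radii: "norm (A - Oc) = R" "norm (B - Oc) = R" "norm (C - Oc) = R"
    using circ by (simp_all add: dist_norm norm_minus_commute)
  have mean_norm: "(norm (t *\<^sub>R (P - Oc)))\<^sup>2 = t\<^sup>2 * (dist Oc P)\<^sup>2"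
    by (simp add: power_mult_distrib dist_norm norm_minus_commute)
  have sides: "norm ((B - Oc) - (C - Oc)) = dist B C" "norm ((C - Oc) - (A - Oc)) = dist C A"
    "norm ((A - Oc) - (B - Oc)) = dist A B"
    by (simp_all add: dist_norm)
  have "t * (t * R\<^sup>2) - t\<^sup>2 * (dist Oc P)\<^sup>2
      = t2 * t3 * (dist B C)\<^sup>2 + t3 * t1 * (dist C A)\<^sup>2 + t1 * t2 * (dist A B)\<^sup>2"
    using weighted_variance_identity[of t1 t2 t3 "A - Oc" "B - Oc" "C - Oc", folded t_def,
        unfolded radii mean mean_norm sides]
    unfolding t_def by (simp add: algebra_simps)
  then show ?thesis
    using t_nz unfolding t_def[symmetric] by (simp add: field_simps power2_eq_square)
qed

lemma weighted_sides_sos: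
  fixes a b c t1 t2 t3 :: real
  shows "(t1 + t2 + t3) * (t2 * t3 * a\<^sup>2 + t3 * t1 * b\<^sup>2 + t1 * t2 * c\<^sup>2)
           - (a + b + c)\<^sup>2 * t1 * t2 * t3
         = t3 * (a * t2 - b * t1)\<^sup>2 + t2 * (a * t3 - c * t1)\<^sup>2 + t1 * (b * t3 - c * t2)\<^sup>2"
  by (simp add: power2_eq_square algebra_simps)

text \<open>Hence, for positive weights, the weighted sum of squared sides dominates
  (a + b + c)^2 t1 t2 t3 / t, with equality exactly for weights proportional to the sides
  (the normalisation a > 0 makes the proportionality constant positive).\<close>

lemma weighted_sides_ineq:
  fixes a b c t1 t2 t3 :: real
  assumes pos: "t1 > 0" "t2 > 0" "t3 > 0" and a_pos: "a > 0"
  defines "S \<equiv> (t1 + t2 + t3) * (t2 * t3 * a\<^sup>2 + t3 * t1 * b\<^sup>2 + t1 * t2 * c\<^sup>2)"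
  shows "(a + b + c)\<^sup>2 * t1 * t2 * t3 \<le> S"
    and "S = (a + b + c)\<^sup>2 * t1 * t2 * t3 \<longleftrightarrow> (\<exists>k > 0. t1 = k * a \<and> t2 = k * b \<and> t3 = k * c)"
proof -
  define q1 q2 q3 where "q1 = t3 * (a * t2 - b * t1)\<^sup>2" and "q2 = t2 * (a * t3 - c * t1)\<^sup>2"
    and "q3 = t1 * (b * t3 - c * t2)\<^sup>2"
  have sos: "S - (a + b + c)\<^sup>2 * t1 * t2 * t3 = q1 + q2 + q3"
    unfolding S_def q1_def q2_def q3_def by (rule weighted_sides_sos)
  have nonneg: "q1 \<ge> 0" "q2 \<ge> 0" "q3 \<ge> 0"
    unfolding q1_def q2_def q3_def using pos by simp_all
  then show "(a + b + c)\<^sup>2 * t1 * t2 * t3 \<le> S"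
    using sos by linarith
  show "S = (a + b + c)\<^sup>2 * t1 * t2 * t3 \<longleftrightarrow> (\<exists>k > 0. t1 = k * a \<and> t2 = k * b \<and> t3 = k * c)"
  proof
    assume "S = (a + b + c)\<^sup>2 * t1 * t2 * t3"
    then have "q1 = 0" "q2 = 0" using sos nonneg by linarith+
    then have proportional: "a * t2 = b * t1" "a * t3 = c * t1"
      unfolding q1_def q2_def using pos by auto
    show "\<exists>k > 0. t1 = k * a \<and> t2 = k * b \<and> t3 = k * c"
      using proportional pos a_pos by (intro exI[of _ "t1 / a"]) (auto simp: field_simps)
  next
    assume "\<exists>k > 0. t1 = k * a \<and> t2 = k * b \<and> t3 = k * c"
    then obtain k where "t1 = k * a" "t2 = k * b" "t3 = k * c" by blast
    then have "q1 + q2 + q3 = 0"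
      unfolding q1_def q2_def q3_def by (simp add: algebra_simps)
    then show "S = (a + b + c)\<^sup>2 * t1 * t2 * t3" using sos by simp
  qed
qed

lemma noncollinear_dist_pos:
  fixes A B C :: "'a::real_normed_vector"
  assumes "\<not> collinear {A, B, C}"
  shows "dist B C > 0"
  using assms by (auto simp: collinear_2 insert_commute)

theorem mainTheorem3:
  fixes A B C Oc P :: "real^2" and R t1 t2 t3 :: real
  assumes triangle: "\<not> collinear {A, B, C}"
    and circ: "dist Oc A = R" "dist Oc B = R" "dist Oc C = R"
    and pos: "t1 > 0" "t2 > 0" "t3 > 0"
    and P_def: "P = (1 / (t1 + t2 + t3)) *\<^sub>R (t1 *\<^sub>R A + t2 *\<^sub>R B + t3 *\<^sub>R C)"
  shows "(R\<^sup>2 - (dist Oc P)\<^sup>2 \<ge>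
           4 * ((dist B C + dist C A + dist A B) / 2)\<^sup>2 * t1 * t2 * t3 / (t1 + t2 + t3) ^ 3)
     \<and> (R\<^sup>2 - (dist Oc P)\<^sup>2 =
           4 * ((dist B C + dist C A + dist A B) / 2)\<^sup>2 * t1 * t2 * t3 / (t1 + t2 + t3) ^ 3
         \<longleftrightarrow> (\<exists>k > 0. t1 = k * dist B C \<and> t2 = k * dist C A \<and> t3 = k * dist A B))"
proof -
  define a b c t where "a = dist B C" and "b = dist C A" and "c = dist A B"
    and "t = t1 + t2 + t3"
  define S where "S = t * (t2 * t3 * a\<^sup>2 + t3 * t1 * b\<^sup>2 + t1 * t2 * c\<^sup>2)"
  have t_pos: "t > 0" using pos unfolding t_def by simp
  have "S / t ^ 3 = (t2 * t3 * a\<^sup>2 + t3 * t1 * b\<^sup>2 + t1 * t2 * c\<^sup>2) / t\<^sup>2"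
    unfolding S_def using t_pos by (simp add: power2_eq_square power3_eq_cube)
  also have "\<dots> = R\<^sup>2 - (dist Oc P)\<^sup>2"
    using power_of_barycentric_point[OF circ _ P_def] t_pos
    unfolding a_def b_def c_def t_def by simp
  finally have power: "R\<^sup>2 - (dist Oc P)\<^sup>2 = S / t ^ 3" ..
  have bound: "4 * ((a + b + c) / 2)\<^sup>2 * t1 * t2 * t3 / t ^ 3 = (a + b + c)\<^sup>2 * t1 * t2 * t3 / t ^ 3"
    by (simp add: power2_eq_square)
  have a_pos: "a > 0" unfolding a_def using noncollinear_dist_pos[OF triangle] .
  note ineq = weighted_sides_ineq[OF pos a_pos, of b c, folded t_def, folded S_def]
  show ?thesis
    unfolding a_def[symmetric] b_def[symmetric] c_def[symmetric] t_def[symmetric] bound power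
    using divide_right_mono[OF ineq(1), of "t ^ 3"] ineq(2) t_pos by simp
qed

end
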